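(* Fix $c\in\mathcal{C}'$ with $\mathcal{S}(c)\setminus\{c\}\neq\emptyset$, and fix the values of all messages $\lambda_{c'\to s}(\mathbf{x}_s)$ with $c'\neq c$. Consider the function of the block $\boldsymbol\lambda_{c,\mathcal{S}(c)}=(\lambda_{c\to s}(\mathbf{x}_s))_{s\in\mathcal{S}(c)\setminus\{c\},\mathbf{x}_s}$ $$g_c(\boldsymbol\lambda_{c,\mathcal{S}(c)})=\max_{\mathbf{x}_c}\Big[\hat\theta_c(\mathbf{x}_c)-\sum_{s\in\mathcal{S}(c)\setminus\{c\}}\lambda_{c\to s}(\mathbf{x}_s)+\lambda_c(\mathbf{x}_c)\Big]+\sum_{s\in\mathcal{S}(c)\setminus\{c\}}\max_{\mathbf{x}_s}\Big[\hat\theta_s(\mathbf{x}_s)-\gamma_s(\mathbf{x}_s)+\lambda_s^{-c}(\mathbf{x}_s)+\lambda_{c\to s}(\mathbf{x}_s)\Big].$$ For all $s\in\mathcal{S}(c)\setminus\{c\}$ and all $\mathbf{x}_s$ let $$\lambda^*_{c\to s}(\mathbf{x}_s)=-\hat\theta_s(\mathbf{x}_s)+\gamma_s(\mathbf{x}_s)-\lambda_s^{-c}(\mathbf{x}_s)+\frac{1}{|\mathcal{S}(c)\setminus\{c\}|}\max_{\mathbf{x}_{c\setminus s}}\Big[\hat\theta_c(\mathbf{x}_c)+\lambda_c(\mathbf{x}_c)+\sum_{\hat s\in\mathcal{S}(c)\setminus\{c\}}\big(\hat\theta_{\hat s}(\mathbf{x}_{\hat s})-\gamma_{\hat s}(\mathbf{x}_{\hat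 s})+\lambda^{-c}_{\hat s}(\mathbf{x}_{\hat s})\big)\Big].$$ Then $\boldsymbol\lambda^*_{c,\mathcal{S}(c)}=(\lambda^*_{c\to s}(\mathbf{x}_s))_{s\in\mathcal{S}(c)\setminus\{c\},\mathbf{x}_s}$ is a minimiser of $g_c$ (over all real-valued blocks $\boldsymbol\lambda_{c,\mathcal{S}(c)}$).
   Context: Let $\mathcal{V}=\{1,\dots,n\}$; each variable $x_i$ takes values in a finite set $\mathrm{Vals}(X_i)$, and for $s\subseteq\mathcal{V}$ write $\mathbf{x}_s=(x_i)_{i\in s}$. Let $\mathcal{C}$ be a collection of subsets of $\mathcal{V}$ with potentials $\theta_c:\prod_{i\in c}\mathrm{Vals}(X_i)\to\mathbb{R}$, $c\in\mathcal{C}$. Let $\mathcal{C}'$ be a collection of subsets of $\mathcal{V}$ ("extended clusters") and for each $c\in\mathcal{C}'$ let $\mathcal{S}(c)$ be a collection of subsets of $c$ (possibly containing $c$ itself), such that $\mathcal{C}'\cup\bigcup_{c\in\mathcal{C}'}\mathcal{S}(c)\supseteq\mathcal{C}$. Put $\mathcal{T}=\mathcal{C}'\cup\bigcup_{c\in\mathcal{C}'}\mathcal{S}(c)$. Messages are real numbers $\lambda_{c\to s}(\mathbf{x}_s)$ for $c\in\mathcal{C}'$, $s\in\mathcal{S}(c)\setminus\{c\}$ and all $\mathbf{x}_s$. For $t\in\mathcal{T}$ define $\hat\theta_t(\mathbf{x}_t)=\mathbb{1}(t\in\mathcal{C})\theta_t(\mathbf{x}_t)$, $\gamma_t(\mathbf{x}_t)=\mathbb{1}(t\in\mathcal{C}')\sum_{\hat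 s\in\mathcal{S}(t)\setminus\{t\}}\lambda_{t\to\hat s}(\mathbf{x}_{\hat s})$, $\lambda_t(\mathbf{x}_t)=\sum_{c'\in\mathcal{C}':\,t\in\mathcal{S}(c')\setminus\{c'\}}\lambda_{c'\to t}(\mathbf{x}_t)$. For $c\in\mathcal{C}'$ and $s\in\mathcal{S}(c)\setminus\{c\}$ define $\lambda_s^{-c}(\mathbf{x}_s)=\sum_{\hat c\in\mathcal{C}':\,\hat c\neq c,\ s\in\mathcal{S}(\hat c)\setminus\{\hat c\}}\lambda_{\hat c\to s}(\mathbf{x}_s)$. *)

theory Defs
  imports Complex_Main "HOL-Library.FuncSet"
begin

text \<open>Assignments to a set s of variables are extensional functions in PiE s Vals.
Potentials theta t and messages lam c s are functions on assignments; they are always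
evaluated at the restriction of an assignment to their scope.\<close>

definition hat_theta :: "'v set set \<Rightarrow> ('v set \<Rightarrow> ('v \<Rightarrow> 'a) \<Rightarrow> real) \<Rightarrow> 'v set \<Rightarrow> ('v \<Rightarrow> 'a) \<Rightarrow> real" where
  "hat_theta C \<theta> t x = (if t \<in> C then \<theta> t (restrict x t) else 0)"

definition gamma :: "'v set set \<Rightarrow> ('v set \<Rightarrow> 'v set set) \<Rightarrow> ('v set \<Rightarrow> 'v set \<Rightarrow> ('v \<Rightarrow> 'a) \<Rightarrow> real)
    \<Rightarrow> 'v set \<Rightarrow> ('v \<Rightarrow> 'a) \<Rightarrow> real" where
  "gamma C' S lam t x = (if t \<in> C' then (\<Sum>s\<in>S t - {t}. lam t s (restrict x s)) else 0)"

definition lam_in :: "'v set set \<Rightarrow> ('v set \<Rightarrow> 'v set set) \<Rightarrow> ('v set \<Rightarrow> 'v set \<Rightarrow> ('v \<Rightarrow> 'a) \<Rightarrow> real)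
    \<Rightarrow> 'v set \<Rightarrow> ('v \<Rightarrow> 'a) \<Rightarrow> real" where
  "lam_in C' S lam t x = (\<Sum>c'\<in>{c'\<in>C'. t \<in> S c' - {c'}}. lam c' t (restrict x t))"

definition lam_minus :: "'v set set \<Rightarrow> ('v set \<Rightarrow> 'v set set) \<Rightarrow> ('v set \<Rightarrow> 'v set \<Rightarrow> ('v \<Rightarrow> 'a) \<Rightarrow> real)
    \<Rightarrow> 'v set \<Rightarrow> 'v set \<Rightarrow> ('v \<Rightarrow> 'a) \<Rightarrow> real" where
  "lam_minus C' S lam c s x = (\<Sum>c'\<in>{c'\<in>C'. c' \<noteq> c \<and> s \<in> S c' - {c'}}. lam c' s (restrict x s))"

definition upd_block :: "('v set \<Rightarrow> 'v set \<Rightarrow> ('v \<Rightarrow> 'a) \<Rightarrow> real) \<Rightarrow> 'v set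
    \<Rightarrow> ('v set \<Rightarrow> ('v \<Rightarrow> 'a) \<Rightarrow> real) \<Rightarrow> ('v set \<Rightarrow> 'v set \<Rightarrow> ('v \<Rightarrow> 'a) \<Rightarrow> real)" where
  "upd_block lam c \<mu> = (\<lambda>c' s. if c' = c then \<mu> s else lam c' s)"

definition g_c :: "('v \<Rightarrow> 'a set) \<Rightarrow> 'v set set \<Rightarrow> 'v set set \<Rightarrow> ('v set \<Rightarrow> 'v set set)
    \<Rightarrow> ('v set \<Rightarrow> ('v \<Rightarrow> 'a) \<Rightarrow> real) \<Rightarrow> ('v set \<Rightarrow> 'v set \<Rightarrow> ('v \<Rightarrow> 'a) \<Rightarrow> real) \<Rightarrow> 'v set
    \<Rightarrow> ('v set \<Rightarrow> ('v \<Rightarrow> 'a) \<Rightarrow> real) \<Rightarrow> real" where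
  "g_c Vals C C' S \<theta> lam c \<mu> =
    (let l = upd_block lam c \<mu> in
      Max ((\<lambda>x. hat_theta C \<theta> c x - (\<Sum>s\<in>S c - {c}. l c s (restrict x s)) + lam_in C' S l c x)
             ` PiE c Vals)
    + (\<Sum>s\<in>S c - {c}.
        Max ((\<lambda>x. hat_theta C \<theta> s x - gamma C' S l s x + lam_minus C' S l c s x + l c s (restrict x s))
             ` PiE s Vals)))"

definition lam_star :: "('v \<Rightarrow> 'a set) \<Rightarrow> 'v set set \<Rightarrow> 'v set set \<Rightarrow> ('v set \<Rightarrow> 'v set set)
    \<Rightarrow> ('v set \<Rightarrow> ('v \<Rightarrow> 'a) \<Rightarrow> real) \<Rightarrow> ('v set \<Rightarrow> 'v set \<Rightarrow> ('v \<Rightarrow> 'a) \<Rightarrow> real) \<Rightarrow> 'v set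
    \<Rightarrow> 'v set \<Rightarrow> ('v \<Rightarrow> 'a) \<Rightarrow> real" where
  "lam_star Vals C C' S \<theta> lam c s xs =
     - hat_theta C \<theta> s xs + gamma C' S lam s xs - lam_minus C' S lam c s xs
     + (1 / real (card (S c - {c}))) *
       Max ((\<lambda>x. hat_theta C \<theta> c x + lam_in C' S lam c x
                 + (\<Sum>s'\<in>S c - {c}. hat_theta C \<theta> s' x - gamma C' S lam s' x + lam_minus C' S lam c s' x))
            ` {x \<in> PiE c Vals. restrict x s = xs})"

end

theory Submission
  imports Defs
begin

text \<open>Write F x = A x + \<Sum>s. B s (\<rho> s x), where A collects the cluster terms of c, B s the
terms of the separator s, and \<rho> s x is the restriction of x to s. For any messages \<mu>, g_c(\<mu>) =
max_x [A x - \<Sum>s. \<mu> s (\<rho> s x)] + \<Sum>s. max_y [B s y + \<mu> s y] is at least max F, because at a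
maximiser of F the messages cancel. For the averaged messages \<mu> s y = - B s y + m s y / k, with
m s y the maximum of F over the fibre \<rho> s x = y and k the number of separators, every separator
term is at most (max F) / k, and the cluster term is at most 0 since F x is bounded by the
average of its fibre maxima m s (\<rho> s x). So g_c attains its lower bound max F there.\<close>

definition dual_bound ::
    "'x set \<Rightarrow> 's set \<Rightarrow> ('s \<Rightarrow> 'x \<Rightarrow> 'y) \<Rightarrow> ('s \<Rightarrow> 'y set)
     \<Rightarrow> ('x \<Rightarrow> real) \<Rightarrow> ('s \<Rightarrow> 'y \<Rightarrow> real) \<Rightarrow> ('s \<Rightarrow> 'y \<Rightarrow> real) \<Rightarrow> real" where
  "dual_bound P T \<rho> Q A B \<mu> =
     Max ((\<lambda>x. A x - (\<Sum>s\<in>T. \<mu> s (\<rho> s x))) ` P) + (\<Sum>s\<in>T. Max ((\<lambda>y. B s y + \<mu> s y) ` Q s))"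

definition averaged_messages ::
    "'x set \<Rightarrow> 's set \<Rightarrow> ('s \<Rightarrow> 'x \<Rightarrow> 'y) \<Rightarrow> ('x \<Rightarrow> real) \<Rightarrow> ('s \<Rightarrow> 'y \<Rightarrow> real) \<Rightarrow> 's \<Rightarrow> 'y \<Rightarrow> real" where
  "averaged_messages P T \<rho> A B s y =
     - B s y + Max ((\<lambda>x. A x + (\<Sum>s'\<in>T. B s' (\<rho> s' x))) ` {x \<in> P. \<rho> s x = y}) / card T"

lemma Max_le_dual_bound:
  assumes "finite P" "P \<noteq> {}" "finite T"
    and \<rho>_in: "\<And>s x. s \<in> T \<Longrightarrow> x \<in> P \<Longrightarrow> \<rho> s x \<in> Q s"
    and Q_fin: "\<And>s. s \<in> T \<Longrightarrow> finite (Q s)"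
  shows "Max ((\<lambda>x. A x + (\<Sum>s\<in>T. B s (\<rho> s x))) ` P) \<le> dual_bound P T \<rho> Q A B \<mu>"
proof -
  let ?F = "\<lambda>x. A x + (\<Sum>s\<in>T. B s (\<rho> s x))"
  obtain x0 where x0: "x0 \<in> P" "?F x0 = Max (?F ` P)"
    using Max_in[of "?F ` P"] assms(1,2) by fastforce
  have "A x0 - (\<Sum>s\<in>T. \<mu> s (\<rho> s x0)) \<le> Max ((\<lambda>x. A x - (\<Sum>s\<in>T. \<mu> s (\<rho> s x))) ` P)"
    using x0(1) assms(1) by simp
  moreover have "(\<Sum>s\<in>T. B s (\<rho> s x0) + \<mu> s (\<rho> s x0)) \<le> (\<Sum>s\<in>T. Max ((\<lambda>y. B s y + \<mu> s y) ` Q s))"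
    using \<rho>_in[OF _ x0(1)] Q_fin by (intro sum_mono) simp
  ultimately show ?thesis
    unfolding dual_bound_def x0(2)[symmetric] by (simp add: sum.distrib)
qed

lemma dual_bound_averaged_messages_le_Max:
  assumes "finite P" "P \<noteq> {}" "finite T" "T \<noteq> {}"
    and \<rho>_onto: "\<And>s. s \<in> T \<Longrightarrow> \<rho> s ` P = Q s"
  shows "dual_bound P T \<rho> Q A B (averaged_messages P T \<rho> A B)
           \<le> Max ((\<lambda>x. A x + (\<Sum>s\<in>T. B s (\<rho> s x))) ` P)"
proof -
  let ?F = "\<lambda>x. A x + (\<Sum>s\<in>T. B s (\<rho> s x))"
  let ?M = "Max (?F ` P)"
  define m where "m s y = Max (?F ` {x \<in> P. \<rho> s x = y})" for s y
  define k where "k = real (card T)"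
  have k_pos: "k > 0" using assms(3,4) by (simp add: k_def card_gt_0_iff)
  have \<mu>_eq: "averaged_messages P T \<rho> A B s y = - B s y + m s y / k" for s y
    by (simp add: averaged_messages_def m_def k_def)
  have F_le_m: "x \<in> P \<Longrightarrow> ?F x \<le> m s (\<rho> s x)" for s x
    unfolding m_def using assms(1) by simp
  have m_le_M: "s \<in> T \<Longrightarrow> y \<in> Q s \<Longrightarrow> m s y \<le> ?M" for s y
  proof -
    assume "s \<in> T" "y \<in> Q s"
    then obtain x where "x \<in> P" "\<rho> s x = y" using \<rho>_onto by (metis imageE)
    then show "m s y \<le> ?M" unfolding m_def using assms(1) by (intro Max_mono) auto
  qed
  have cluster_le: "A x - (\<Sum>s\<in>T. averaged_messages P T \<rho> A B s (\<rho> s x)) \<le> 0" if "x \<in> P" for x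
  proof -
    have "k * ?F x = (\<Sum>s\<in>T. ?F x)" by (simp add: k_def)
    also have "\<dots> \<le> (\<Sum>s\<in>T. m s (\<rho> s x))" using F_le_m[OF that] by (rule sum_mono)
    finally have "?F x \<le> (\<Sum>s\<in>T. m s (\<rho> s x)) / k"
      using k_pos by (simp add: pos_le_divide_eq mult.commute)
    then show ?thesis
      by (simp add: \<mu>_eq sum_subtractf sum_divide_distrib)
  qed
  have separator_le: "Max ((\<lambda>y. B s y + averaged_messages P T \<rho> A B s y) ` Q s) \<le> ?M / k"
    if "s \<in> T" for s
  proof -
    have "finite (Q s)" "Q s \<noteq> {}"
      using \<rho>_onto[OF that, symmetric] assms(1,2) by simp_all
    moreover have "m s y / k \<le> ?M / k" if "y \<in> Q s" for y
      using m_le_M[OF \<open>s \<in> T\<close> that] k_pos by (simp add: divide_right_mono)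
    ultimately show ?thesis by (simp add: \<mu>_eq)
  qed
  have "dual_bound P T \<rho> Q A B (averaged_messages P T \<rho> A B) \<le> 0 + (\<Sum>s\<in>T. ?M / k)"
    unfolding dual_bound_def
    using cluster_le separator_le assms(1) assms(2) by (intro add_mono sum_mono) auto
  also have "\<dots> = ?M" using k_pos by (simp add: k_def)
  finally show ?thesis .
qed

lemma image_restrict_PiE:
  assumes "s \<subseteq> c" "\<And>i. Vals i \<noteq> {}"
  shows "(\<lambda>x. restrict x s) ` PiE c Vals = PiE s Vals"
proof
  show "(\<lambda>x. restrict x s) ` PiE c Vals \<subseteq> PiE s Vals"
    using assms(1) by (auto simp: PiE_iff)
next
  show "PiE s Vals \<subseteq> (\<lambda>x. restrict x s) ` PiE c Vals"
  proof
    fix y assume y: "y \<in> PiE s Vals"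
    define x where "x = (\<lambda>v. if v \<in> s then y v else if v \<in> c then SOME a. a \<in> Vals v else undefined)"
    have "x \<in> PiE c Vals"
      using y assms by (auto simp: x_def PiE_iff some_in_eq extensional_def)
    moreover have "restrict x s = y"
      using y by (auto simp: x_def PiE_iff extensional_def)
    ultimately show "y \<in> (\<lambda>x. restrict x s) ` PiE c Vals" by force
  qed
qed

definition cluster_potential ::
    "'v set set \<Rightarrow> 'v set set \<Rightarrow> ('v set \<Rightarrow> 'v set set) \<Rightarrow> ('v set \<Rightarrow> ('v \<Rightarrow> 'a) \<Rightarrow> real)
     \<Rightarrow> ('v set \<Rightarrow> 'v set \<Rightarrow> ('v \<Rightarrow> 'a) \<Rightarrow> real) \<Rightarrow> 'v set \<Rightarrow> ('v \<Rightarrow> 'a) \<Rightarrow> real" where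
  "cluster_potential C C' S \<theta> lam c x = hat_theta C \<theta> c x + lam_in C' S lam c x"

definition separator_potential ::
    "'v set set \<Rightarrow> 'v set set \<Rightarrow> ('v set \<Rightarrow> 'v set set) \<Rightarrow> ('v set \<Rightarrow> ('v \<Rightarrow> 'a) \<Rightarrow> real)
     \<Rightarrow> ('v set \<Rightarrow> 'v set \<Rightarrow> ('v \<Rightarrow> 'a) \<Rightarrow> real) \<Rightarrow> 'v set \<Rightarrow> 'v set \<Rightarrow> ('v \<Rightarrow> 'a) \<Rightarrow> real" where
  "separator_potential C C' S \<theta> lam c s x =
     hat_theta C \<theta> s x - gamma C' S lam s x + lam_minus C' S lam c s x"

lemma separator_potential_restrict:
  assumes "\<And>c'. c' \<in> C' \<Longrightarrow> S c' \<subseteq> Pow c'"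
  shows "separator_potential C C' S \<theta> lam c s (restrict x s) = separator_potential C C' S \<theta> lam c s x"
proof -
  have "s \<inter> s' = s'" if "s \<in> C'" "s' \<in> S s" for s'
    using assms[OF that(1)] that(2) by blast
  then have "gamma C' S lam s (restrict x s) = gamma C' S lam s x"
    by (simp add: gamma_def)
  then show ?thesis
    by (simp add: separator_potential_def hat_theta_def lam_minus_def)
qed

text \<open>Messages sent by c enter g_c only through the explicit block \<mu>: c contributes nothing to
its own incoming sum lam_in, to lam_minus, or (as s \<noteq> c) to gamma of its separators.\<close>

lemma g_c_eq_dual_bound:
  "g_c Vals C C' S \<theta> lam c \<mu> =
     dual_bound (PiE c Vals) (S c - {c}) (\<lambda>s x. restrict x s) (\<lambda>s. PiE s Vals)
       (cluster_potential C C' S \<theta> lam c) (separator_potential C C' S \<theta> lam c) \<mu>"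
proof -
  let ?l = "upd_block lam c \<mu>"
  have "lam_in C' S ?l c = lam_in C' S lam c"
    unfolding lam_in_def upd_block_def by (intro ext sum.cong) auto
  moreover have "lam_minus C' S ?l c = lam_minus C' S lam c"
    unfolding lam_minus_def upd_block_def by (intro ext sum.cong) auto
  moreover have "gamma C' S ?l s x = gamma C' S lam s x" if "s \<in> S c - {c}" for s x
    using that by (simp add: gamma_def upd_block_def)
  ultimately show ?thesis
    unfolding g_c_def dual_bound_def Let_def
    by (intro arg_cong2[where f = "(+)"] arg_cong[where f = Max] image_cong sum.cong)
       (auto simp: upd_block_def cluster_potential_def separator_potential_def)
qed

lemma lam_star_eq_averaged_messages:
  assumes "\<And>c'. c' \<in> C' \<Longrightarrow> S c' \<subseteq> Pow c'"
  shows "lam_star Vals C C' S \<theta> lam c =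
     averaged_messages (PiE c Vals) (S c - {c}) (\<lambda>s x. restrict x s)
       (cluster_potential C C' S \<theta> lam c) (separator_potential C C' S \<theta> lam c)"
proof (intro ext)
  fix s xs
  let ?A = "cluster_potential C C' S \<theta> lam c" and ?B = "separator_potential C C' S \<theta> lam c"
  have "lam_star Vals C C' S \<theta> lam c s xs =
      - ?B s xs + Max ((\<lambda>x. ?A x + (\<Sum>s'\<in>S c - {c}. ?B s' x)) ` {x \<in> PiE c Vals. restrict x s = xs})
        / card (S c - {c})"
    by (simp add: lam_star_def cluster_potential_def separator_potential_def)
  then show "lam_star Vals C C' S \<theta> lam c s xs = averaged_messages (PiE c Vals) (S c - {c})
      (\<lambda>s x. restrict x s) ?A ?B s xs"
    by (simp add: averaged_messages_def separator_potential_restrict[OF assms])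
qed

theorem proposition1:
  fixes Vals :: "'v::finite \<Rightarrow> 'a set"
    and C C' :: "'v set set"
    and S :: "'v set \<Rightarrow> 'v set set"
    and \<theta> :: "'v set \<Rightarrow> ('v \<Rightarrow> 'a) \<Rightarrow> real"
    and lam :: "'v set \<Rightarrow> 'v set \<Rightarrow> ('v \<Rightarrow> 'a) \<Rightarrow> real"
    and c :: "'v set"
  assumes vals_fin: "\<And>i. finite (Vals i)"
    and vals_ne: "\<And>i. Vals i \<noteq> {}"
    and S_sub: "\<And>c'. c' \<in> C' \<Longrightarrow> S c' \<subseteq> Pow c'"
    and C_cov: "C \<subseteq> C' \<union> (\<Union>c'\<in>C'. S c')"
    and c_in: "c \<in> C'"
    and S_ne: "S c - {c} \<noteq> {}"
  shows "\<forall>\<mu>. g_c Vals C C' S \<theta> lam c (lam_star Vals C C' S \<theta> lam c)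
             \<le> g_c Vals C C' S \<theta> lam c \<mu>"
proof
  fix \<mu>
  let ?T = "S c - {c}" and ?\<rho> = "\<lambda>s x. restrict x s" and ?Q = "\<lambda>s. PiE s Vals"
  let ?A = "cluster_potential C C' S \<theta> lam c" and ?B = "separator_potential C C' S \<theta> lam c"
  have fin: "\<And>s. finite (PiE s Vals)" and ne: "\<And>s. PiE s Vals \<noteq> {}"
    by (simp_all add: finite_PiE vals_fin PiE_eq_empty_iff vals_ne)
  have onto: "\<And>s. s \<in> ?T \<Longrightarrow> ?\<rho> s ` PiE c Vals = ?Q s"
    using S_sub[OF c_in] vals_ne by (intro image_restrict_PiE) auto
  have "g_c Vals C C' S \<theta> lam c (lam_star Vals C C' S \<theta> lam c)
          = dual_bound (PiE c Vals) ?T ?\<rho> ?Q ?A ?B (averaged_messages (PiE c Vals) ?T ?\<rho> ?A ?B)"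
    by (simp add: g_c_eq_dual_bound lam_star_eq_averaged_messages[OF S_sub])
  also have "\<dots> \<le> Max ((\<lambda>x. ?A x + (\<Sum>s\<in>?T. ?B s (?\<rho> s x))) ` PiE c Vals)"
    using fin ne S_ne onto by (intro dual_bound_averaged_messages_le_Max) auto
  also have "\<dots> \<le> dual_bound (PiE c Vals) ?T ?\<rho> ?Q ?A ?B \<mu>"
  proof (rule Max_le_dual_bound)
    show "\<And>s x. s \<in> ?T \<Longrightarrow> x \<in> PiE c Vals \<Longrightarrow> ?\<rho> s x \<in> ?Q s"
      using onto by blast
  qed (use fin ne in auto)
  also have "\<dots> = g_c Vals C C' S \<theta> lam c \<mu>"
    by (simp add: g_c_eq_dual_bound)
  finally show "g_c Vals C C' S \<theta> lam c (lam_star Vals C C' S \<theta> lam c) \<le> g_c Vals C C' S \<theta> lam c \<mu>" .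
qed

end
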